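(* If a complete edge-colored graph $G=(V,E_1,\dots,E_k)$ contains a rainbow triangle, then $G$ is not a complete edge-colored permutation graph.
   Context: A complete $k$-edge-colored graph $G=(V,E_1,\dots,E_k)$ is the complete graph on a finite set $V$ whose edges are partitioned into $k$ nonempty color classes $E_i$; $G_{|i}=(V,E_i)$. A rainbow triangle is a set of three vertices whose three edges have pairwise distinct colors. A labeling is a bijection $\ell:V\to\{1,\dots,|V|\}$. A graph $(V,E)$ with labeling $\ell$ is a simple permutation graph of a permutation $\pi$ of $\{1,\dots,|V|\}$ if for all $u,v$ with $\ell(u)>\ell(v)$: $\{u,v\}\in E$ iff $\pi^{-1}(\ell(u))<\pi^{-1}(\ell(v))$. $G$ is a complete edge-colored permutation graph if there exist a labeling $\ell$ and permutations $\pi_1,\dots,\pi_k$ with $(G_{|i},\ell)$ a simple permutation graph of $\pi_i$ for all $i$. *)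

theory Defs
  imports Main "HOL-Combinatorics.Permutations"
begin

definition all_edges :: "'a set \<Rightarrow> 'a set set" where
  "all_edges V = {e. \<exists>u v. u \<in> V \<and> v \<in> V \<and> u \<noteq> v \<and> e = {u, v}}"

definition complete_edge_colored :: "'a set \<Rightarrow> nat \<Rightarrow> (nat \<Rightarrow> 'a set set) \<Rightarrow> bool" where
  "complete_edge_colored V k E \<longleftrightarrow>
     finite V \<and>
     (\<forall>i\<in>{1..k}. E i \<noteq> {} \<and> E i \<subseteq> all_edges V) \<and>
     (\<forall>i\<in>{1..k}. \<forall>j\<in>{1..k}. i \<noteq> j \<longrightarrow> E i \<inter> E j = {}) \<and>
     (\<Union>i\<in>{1..k}. E i) = all_edges V"

definition has_rainbow_triangle :: "'a set \<Rightarrow> nat \<Rightarrow> (nat \<Rightarrow> 'a set set) \<Rightarrow> bool" where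
  "has_rainbow_triangle V k E \<longleftrightarrow>
     (\<exists>x\<in>V. \<exists>y\<in>V. \<exists>z\<in>V. x \<noteq> y \<and> y \<noteq> z \<and> x \<noteq> z \<and>
       (\<exists>a\<in>{1..k}. \<exists>b\<in>{1..k}. \<exists>c\<in>{1..k}. a \<noteq> b \<and> b \<noteq> c \<and> a \<noteq> c \<and>
          {x, y} \<in> E a \<and> {y, z} \<in> E b \<and> {x, z} \<in> E c))"

definition labeling :: "'a set \<Rightarrow> ('a \<Rightarrow> nat) \<Rightarrow> bool" where
  "labeling V l \<longleftrightarrow> bij_betw l V {1..card V}"

definition simple_perm_graph :: "'a set \<Rightarrow> 'a set set \<Rightarrow> ('a \<Rightarrow> nat) \<Rightarrow> (nat \<Rightarrow> nat) \<Rightarrow> bool" where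
  "simple_perm_graph V F l \<pi> \<longleftrightarrow>
     \<pi> permutes {1..card V} \<and>
     (\<forall>u\<in>V. \<forall>v\<in>V. l u > l v \<longrightarrow> ({u, v} \<in> F \<longleftrightarrow> inv \<pi> (l u) < inv \<pi> (l v)))"

definition complete_edge_colored_perm_graph :: "'a set \<Rightarrow> nat \<Rightarrow> (nat \<Rightarrow> 'a set set) \<Rightarrow> bool" where
  "complete_edge_colored_perm_graph V k E \<longleftrightarrow>
     complete_edge_colored V k E \<and>
     (\<exists>l. labeling V l \<and> (\<exists>\<pi>. \<forall>i\<in>{1..k}. simple_perm_graph V (E i) l (\<pi> i)))"

end

theory Submission
  imports Defs
begin

text \<open>Orient the edges of a simple permutation graph from smaller to larger label: an edge is an
  inversion of \<pi>, and non-inversions are transitive. Hence an edge joining the smallest and the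
  largest vertex of a triangle forces one of the two other edges of the triangle into the graph.
  In a rainbow triangle, the color class of the edge between the extreme vertices contains
  neither of the other two edges, so it cannot be a simple permutation graph for the common
  labeling.\<close>

definition rainbow :: "nat \<Rightarrow> (nat \<Rightarrow> 'a set set) \<Rightarrow> 'a set \<Rightarrow> bool" where
  "rainbow k E T \<longleftrightarrow>
     (\<forall>i\<in>{1..k}. \<forall>e\<in>all_edges T. \<forall>e'\<in>all_edges T. e \<in> E i \<longrightarrow> e' \<in> E i \<longrightarrow> e = e')"

lemma simple_perm_graph_outer_edge:
  assumes "simple_perm_graph V F l \<pi>" "u \<in> V" "v \<in> V" "w \<in> V"
    and "l u < l v" "l v < l w" "{u, w} \<in> F"
  shows "{u, v} \<in> F \<or> {v, w} \<in> F"
proof (rule ccontr)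
  assume "\<not> ({u, v} \<in> F \<or> {v, w} \<in> F)"
  then have "{v, u} \<notin> F" "{w, v} \<notin> F" "{w, u} \<in> F"
    using assms(7) by (auto simp: insert_commute)
  moreover have "l u < l w" using assms(5,6) by linarith
  ultimately have "inv \<pi> (l u) \<le> inv \<pi> (l v)" "inv \<pi> (l v) \<le> inv \<pi> (l w)"
    and "inv \<pi> (l w) < inv \<pi> (l u)"
    using assms(1-6) unfolding simple_perm_graph_def by (meson not_less)+
  then show False by linarith
qed

lemma obtain_rainbow_triangle:
  assumes "complete_edge_colored V k E" "has_rainbow_triangle V k E"
  obtains T where "T \<subseteq> V" "card T = 3" "rainbow k E T"
proof -
  obtain x y z a b c where xyz: "x \<in> V" "y \<in> V" "z \<in> V" "x \<noteq> y" "y \<noteq> z" "x \<noteq> z"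
    and abc: "a \<in> {1..k}" "b \<in> {1..k}" "c \<in> {1..k}" "a \<noteq> b" "b \<noteq> c" "a \<noteq> c"
    and edges: "{x, y} \<in> E a" "{y, z} \<in> E b" "{x, z} \<in> E c"
    using assms(2) unfolding has_rainbow_triangle_def by blast
  have color_unique: "\<And>i j e. i \<in> {1..k} \<Longrightarrow> j \<in> {1..k} \<Longrightarrow> e \<in> E i \<Longrightarrow> e \<in> E j \<Longrightarrow> i = j"
    using assms(1) unfolding complete_edge_colored_def by (meson disjoint_iff)
  have "rainbow k E {x, y, z}"
    unfolding rainbow_def
  proof (intro ballI impI)
    fix i e e' assume i: "i \<in> {1..k}"
      and e: "e \<in> all_edges {x, y, z}" "e' \<in> all_edges {x, y, z}" "e \<in> E i" "e' \<in> E i"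
    have "all_edges {x, y, z} \<subseteq> {{x, y}, {y, z}, {x, z}}"
      by (auto simp: all_edges_def insert_commute)
    then show "e = e'" using e color_unique[OF i] abc edges by blast
  qed
  moreover have "card {x, y, z} = 3" using xyz by simp
  ultimately show ?thesis using that[of "{x, y, z}"] xyz by simp
qed

lemma card_3_sorted_by:
  assumes "card T = 3" "inj_on l T"
  obtains u v w where "T = {u, v, w}" "(l u :: 'b :: linorder) < l v" "l v < l w"
proof -
  obtain x y z where T: "T = {x, y, z}" "x \<noteq> y" "y \<noteq> z" "x \<noteq> z"
    using assms(1) by (auto simp: card_3_iff)
  then have "l x \<noteq> l y" "l y \<noteq> l z" "l x \<noteq> l z"
    using assms(2) by (auto dest: inj_onD)
  then consider "l x < l y" "l y < l z" | "l x < l z" "l z < l y" | "l y < l x" "l x < l z"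
    | "l y < l z" "l z < l x" | "l z < l x" "l x < l y" | "l z < l y" "l y < l x"
    by fastforce
  then show ?thesis
  proof cases
    case 1 then show ?thesis using that[of x y z] T(1) by blast
  next
    case 2 then show ?thesis using that[of x z y] T(1) by (simp add: insert_commute)
  next
    case 3 then show ?thesis using that[of y x z] T(1) by (simp add: insert_commute)
  next
    case 4 then show ?thesis using that[of y z x] T(1) by (simp add: insert_commute)
  next
    case 5 then show ?thesis using that[of z x y] T(1) by (simp add: insert_commute)
  next
    case 6 then show ?thesis using that[of z y x] T(1) by (simp add: insert_commute)
  qed
qed

theorem lemma3p10:
  fixes V :: "'a set" and k :: nat and E :: "nat \<Rightarrow> 'a set set"
  assumes "complete_edge_colored V k E"
    and "has_rainbow_triangle V k E"
  shows "\<not> complete_edge_colored_perm_graph V k E"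
proof
  assume "complete_edge_colored_perm_graph V k E"
  then obtain l \<pi> where lab: "labeling V l"
    and perm: "\<And>i. i \<in> {1..k} \<Longrightarrow> simple_perm_graph V (E i) l (\<pi> i)"
    unfolding complete_edge_colored_perm_graph_def by blast
  obtain T where T: "T \<subseteq> V" "card T = 3" "rainbow k E T"
    using obtain_rainbow_triangle assms by blast
  have "inj_on l T"
    using lab T(1) unfolding labeling_def by (meson bij_betw_imp_inj_on inj_on_subset)
  then obtain u v w where uvw: "T = {u, v, w}" "l u < l v" "l v < l w"
    using card_3_sorted_by T(2) by blast
  have "{u, w} \<in> all_edges V"
    using T(1) uvw unfolding all_edges_def by fastforce
  then obtain d where d: "d \<in> {1..k}" "{u, w} \<in> E d"
    using assms(1) unfolding complete_edge_colored_def by blast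
  have "u \<noteq> v" "v \<noteq> w" "u \<noteq> w" using uvw(2,3) by auto
  then have "{u, v} \<in> all_edges T" "{v, w} \<in> all_edges T" "{u, w} \<in> all_edges T"
    and "{u, v} \<noteq> {u, w}" "{v, w} \<noteq> {u, w}"
    unfolding uvw(1) all_edges_def by (auto simp: doubleton_eq_iff)
  then have "{u, v} \<notin> E d" "{v, w} \<notin> E d"
    using T(3) d unfolding rainbow_def by blast+
  then show False
    using simple_perm_graph_outer_edge[OF perm[OF d(1)]] T(1) uvw d(2) by blast
qed

end
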